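(* Let $\mathbb{X},\mathbb{Y}$ be real normed linear spaces and $T\in\mathbb{B}(\mathbb{X},\mathbb{Y})$ such that: (i) $M_T=\{\pm x_0\}$ for some $x_0\in S_{\mathbb{X}}$; (ii) $Tx_0$ is a smooth point of $\mathbb{Y}$; (iii) every norming sequence $\{x_n\}$ for $T$ has a subsequence converging (in norm) to $ax_0$ for some $a\in\mathbb{R}$ with $|a|=1$. Then $T$ is a smooth point of $\mathbb{B}(\mathbb{X},\mathbb{Y})$.
   Context: All spaces are real; $\mathbb{B}(\mathbb{X},\mathbb{Y})$ has the operator norm; $S_{\mathbb{X}}$ is the unit sphere; $M_T=\{x\in S_{\mathbb{X}}:\|Tx\|=\|T\|\}$. A norming sequence for $T$ is $\{x_n\}\subseteq S_{\mathbb{X}}$ with $\|Tx_n\|\to\|T\|$. A nonzero element $x$ of a normed space $\mathbb{Z}$ is smooth if there is a unique $f\in\mathbb{Z}^*$ with $\|f\|=1$ and $f(x)=\|x\|$. *)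

theory Defs
  imports "HOL-Analysis.Analysis"
begin

definition smooth_point :: "'a::real_normed_vector \<Rightarrow> bool" where
  "smooth_point x \<longleftrightarrow> x \<noteq> 0 \<and>
     (\<exists>!f :: 'a \<Rightarrow>\<^sub>L real. norm f = 1 \<and> blinfun_apply f x = norm x)"

definition norm_attain_set :: "('a::real_normed_vector \<Rightarrow>\<^sub>L 'b::real_normed_vector) \<Rightarrow> 'a set" where
  "norm_attain_set T = {x. norm x = 1 \<and> norm (blinfun_apply T x) = norm T}"

definition norming_sequence :: "('a::real_normed_vector \<Rightarrow>\<^sub>L 'b::real_normed_vector) \<Rightarrow> (nat \<Rightarrow> 'a) \<Rightarrow> bool" where
  "norming_sequence T xs \<longleftrightarrow> (\<forall>n. norm (xs n) = 1) \<and>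
     (\<lambda>n. norm (blinfun_apply T (xs n))) \<longlonglongrightarrow> norm T"

end

theory Submission
  imports Defs
begin

text \<open>Let \<open>g\<close> be the unique support functional of \<open>T x\<^sub>0\<close>. Then \<open>G S = g (S x\<^sub>0)\<close> supports \<open>T\<close>,
  and any other support functional \<open>F\<close> satisfies \<open>F \<le> G\<close>, hence \<open>F = G\<close>. Indeed, if \<open>F S > G S\<close>,
  smoothness of \<open>T x\<^sub>0\<close> yields \<open>s > 0\<close> and \<open>c < F S\<close> with \<open>\<parallel>T x\<^sub>0 + s S x\<^sub>0\<parallel> < \<parallel>T x\<^sub>0\<parallel> + s c\<close>
  (otherwise Hahn--Banach would produce a second support functional of \<open>T x\<^sub>0\<close>). On the other hand
  \<open>F\<close> forces \<open>\<parallel>T + t S\<parallel> \<ge> \<parallel>T\<parallel> + t F S\<close>; unit vectors almost attaining \<open>\<parallel>T + t S\<parallel>\<close> for \<open>t \<rightarrow> 0\<close>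
  form a norming sequence for \<open>T\<close>, and convexity of \<open>t \<mapsto> \<parallel>(T + t S) y\<parallel>\<close> carries the growth
  rate over to \<open>t = s\<close>. Passing to a subsequence converging to \<open>\<plusminus>x\<^sub>0\<close> contradicts the choice of \<open>s\<close>.\<close>

text \<open>A linear functional on a subspace, dominated by the norm, encoded by its graph; the
  graphs are ordered by inclusion, so Zorn's lemma gives the Hahn--Banach extension.\<close>

definition norm_dominated_graph :: "('b::real_normed_vector \<times> real) set \<Rightarrow> bool" where
  "norm_dominated_graph G \<longleftrightarrow> (0, 0) \<in> G
     \<and> (\<forall>x a y b. (x, a) \<in> G \<longrightarrow> (y, b) \<in> G \<longrightarrow> (x + y, a + b) \<in> G)
     \<and> (\<forall>x a r. (x, a) \<in> G \<longrightarrow> (r *\<^sub>R x, r * a) \<in> G)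
     \<and> (\<forall>x a b. (x, a) \<in> G \<longrightarrow> (x, b) \<in> G \<longrightarrow> a = b)
     \<and> (\<forall>x a. (x, a) \<in> G \<longrightarrow> a \<le> norm x)"

lemma norm_dominated_graphD:
  assumes "norm_dominated_graph G"
  shows norm_dominated_graph_zero: "(0, 0) \<in> G"
    and norm_dominated_graph_add: "\<And>x a y b. (x, a) \<in> G \<Longrightarrow> (y, b) \<in> G \<Longrightarrow> (x + y, a + b) \<in> G"
    and norm_dominated_graph_scaleR: "\<And>x a r. (x, a) \<in> G \<Longrightarrow> (r *\<^sub>R x, r * a) \<in> G"
    and norm_dominated_graph_unique: "\<And>x a b. (x, a) \<in> G \<Longrightarrow> (x, b) \<in> G \<Longrightarrow> a = b"
    and norm_dominated_graph_le_norm: "\<And>x a. (x, a) \<in> G \<Longrightarrow> a \<le> norm x"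
  using assms unfolding norm_dominated_graph_def by blast+

lemma chain_two_in_member:
  assumes "C \<in> chains A" "p \<in> \<Union>C" "q \<in> \<Union>C"
  obtains K where "K \<in> C" "p \<in> K" "q \<in> K"
  using assms chainsD[OF assms(1)] by (metis UnionE subsetD)

lemma norm_dominated_graph_Union_chain:
  assumes C: "C \<in> chains A" and dom: "\<And>G. G \<in> C \<Longrightarrow> norm_dominated_graph G"
    and "C \<noteq> {}"
  shows "norm_dominated_graph (\<Union>C)"
  unfolding norm_dominated_graph_def
proof (intro conjI allI impI)
  show "(0, 0) \<in> \<Union>C"
    using \<open>C \<noteq> {}\<close> dom norm_dominated_graph_zero by blast
next
  fix x a y b assume "(x, a) \<in> \<Union>C" "(y, b) \<in> \<Union>C"
  with C obtain K where "K \<in> C" "(x, a) \<in> K" "(y, b) \<in> K" by (rule chain_two_in_member)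
  then show "(x + y, a + b) \<in> \<Union>C" using dom norm_dominated_graph_add by blast
next
  fix x a r assume "(x, a) \<in> \<Union>C"
  then show "(r *\<^sub>R x, r * a) \<in> \<Union>C" using dom norm_dominated_graph_scaleR by blast
next
  fix x a b assume "(x, a) \<in> \<Union>C" "(x, b) \<in> \<Union>C"
  with C obtain K where "K \<in> C" "(x, a) \<in> K" "(x, b) \<in> K" by (rule chain_two_in_member)
  then show "a = b" using dom norm_dominated_graph_unique by blast
next
  fix x a assume "(x, a) \<in> \<Union>C"
  then show "a \<le> norm x" using dom norm_dominated_graph_le_norm by blast
qed

lemma norm_dominated_graph_extension_value:
  assumes G: "norm_dominated_graph G"
  obtains c where "\<And>m a. (m, a) \<in> G \<Longrightarrow> a + c \<le> norm (m + y) \<and> a - c \<le> norm (m - y)"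
proof -
  have gap: "a - norm (m - y) \<le> norm (m' + y) - a'" if "(m, a) \<in> G" "(m', a') \<in> G" for m a m' a'
  proof -
    have "a + a' \<le> norm (m + m')"
      using that G norm_dominated_graph_add norm_dominated_graph_le_norm by blast
    also have "\<dots> \<le> norm (m - y) + norm (m' + y)"
      using norm_triangle_ineq[of "m - y" "m' + y"] by simp
    finally show ?thesis by linarith
  qed
  define L where "L = {a - norm (m - y) | m a. (m, a) \<in> G}"
  have "(0, 0) \<in> G" using G by (rule norm_dominated_graph_zero)
  then have "L \<noteq> {}" "bdd_above L"
    unfolding L_def bdd_above_def using gap by force+
  then have "a - norm (m - y) \<le> Sup L \<and> Sup L \<le> norm (m + y) - a" if "(m, a) \<in> G" for m a
    using that gap by (auto intro!: cSup_upper cSup_least simp: L_def)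
  then show thesis by (intro that[of "Sup L"]) force
qed

lemma norm_dominated_graph_extension_le_norm:
  assumes G: "norm_dominated_graph G" and m: "(m, a) \<in> G"
    and c: "\<And>m a. (m, a) \<in> G \<Longrightarrow> a + c \<le> norm (m + y) \<and> a - c \<le> norm (m - y)"
  shows "a + t * c \<le> norm (m + t *\<^sub>R y)"
proof (cases "t = 0")
  case True
  then show ?thesis using m norm_dominated_graph_le_norm[OF G] by simp
next
  case False
  \<comment> \<open>rescale by \<open>|t|\<close> to one of the two bounds defining \<open>c\<close>\<close>
  define r where "r = \<bar>t\<bar>"
  have r: "r > 0" "t = sgn t * r" using False by (auto simp: r_def sgn_if)
  have "a / r + sgn t * c \<le> norm (m /\<^sub>R r + sgn t *\<^sub>R y)"
    using c[OF norm_dominated_graph_scaleR[OF G m, of "inverse r"]] False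
    by (cases "t > 0") (auto simp: sgn_if divide_inverse mult.commute)
  then have "r * (a / r + sgn t * c) \<le> r * norm (m /\<^sub>R r + sgn t *\<^sub>R y)"
    using r by simp
  also have "r * norm (m /\<^sub>R r + sgn t *\<^sub>R y) = norm (r *\<^sub>R (m /\<^sub>R r + sgn t *\<^sub>R y))"
    using r by simp
  also have "r *\<^sub>R (m /\<^sub>R r + sgn t *\<^sub>R y) = m + t *\<^sub>R y"
    using r by (simp add: scaleR_add_right mult.commute)
  finally show ?thesis using r by (simp add: algebra_simps)
qed

lemma norm_dominated_graph_extension_unique:
  assumes G: "norm_dominated_graph G" and y: "\<And>a. (y, a) \<notin> G"
    and m: "(m, a) \<in> G" "(m', a') \<in> G" and eq: "m + t *\<^sub>R y = m' + t' *\<^sub>R y"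
  shows "t = t'" "a = a'"
proof -
  have diff: "(m - m', a - a') \<in> G"
    using norm_dominated_graph_add[OF G m(1) norm_dominated_graph_scaleR[OF G m(2), of "-1"]] by simp
  show "t = t'"
  proof (rule ccontr)
    assume "t \<noteq> t'"
    moreover have "m - m' = (t' - t) *\<^sub>R y"
      using eq by (simp add: algebra_simps)
    ultimately have "y = (1 / (t' - t)) *\<^sub>R (m - m')"
      by simp
    then show False using norm_dominated_graph_scaleR[OF G diff] y by metis
  qed
  with eq have "m = m'" by simp
  then show "a = a'" using m norm_dominated_graph_unique[OF G] by blast
qed

lemma norm_dominated_graph_extension:
  assumes G: "norm_dominated_graph G" and y: "\<And>a. (y, a) \<notin> G"
    and c: "\<And>m a. (m, a) \<in> G \<Longrightarrow> a + c \<le> norm (m + y) \<and> a - c \<le> norm (m - y)"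
  shows "norm_dominated_graph {(m + t *\<^sub>R y, a + t * c) | m a t. (m, a) \<in> G}"
    (is "norm_dominated_graph ?G'")
proof -
  have mem: "(m + t *\<^sub>R y, a + t * c) \<in> ?G'" if "(m, a) \<in> G" for m a t
    using that by blast
  note add = norm_dominated_graph_add[OF G] and scale = norm_dominated_graph_scaleR[OF G]
  show ?thesis
    unfolding norm_dominated_graph_def
  proof (intro conjI allI impI)
    show "(0, 0) \<in> ?G'" using mem[OF norm_dominated_graph_zero[OF G], of 0] by simp
  next
    fix x a x' b assume "(x, a) \<in> ?G'" "(x', b) \<in> ?G'"
    then obtain m a1 t m' a1' t' where "(m, a1) \<in> G" "(m', a1') \<in> G"
      "x = m + t *\<^sub>R y" "a = a1 + t * c" "x' = m' + t' *\<^sub>R y" "b = a1' + t' * c"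
      by blast
    then show "(x + x', a + b) \<in> ?G'"
      using mem[OF add, of m a1 m' a1' "t + t'"] by (simp add: algebra_simps)
  next
    fix x a r assume "(x, a) \<in> ?G'"
    then obtain m a1 t where "(m, a1) \<in> G" "x = m + t *\<^sub>R y" "a = a1 + t * c"
      by blast
    then show "(r *\<^sub>R x, r * a) \<in> ?G'"
      using mem[OF scale, of m a1 r "r * t"] by (simp add: algebra_simps)
  next
    fix x a b assume "(x, a) \<in> ?G'" "(x, b) \<in> ?G'"
    then obtain m a1 t m' a1' t' where "(m, a1) \<in> G" "(m', a1') \<in> G"
      "x = m + t *\<^sub>R y" "a = a1 + t * c" "x = m' + t' *\<^sub>R y" "b = a1' + t' * c"
      by blast
    then show "a = b" using norm_dominated_graph_extension_unique[OF G y] by metis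
  next
    fix x a assume "(x, a) \<in> ?G'"
    then show "a \<le> norm x" using norm_dominated_graph_extension_le_norm[OF G _ c] by blast
  qed
qed

lemma norm_dominated_graph_extend:
  assumes G: "norm_dominated_graph G" and y: "\<And>a. (y, a) \<notin> G"
  obtains G' where "norm_dominated_graph G'" "G \<subset> G'"
proof -
  obtain c where c: "\<And>m a. (m, a) \<in> G \<Longrightarrow> a + c \<le> norm (m + y) \<and> a - c \<le> norm (m - y)"
    using norm_dominated_graph_extension_value[OF G] by blast
  let ?G' = "{(m + t *\<^sub>R y, a + t * c) | m a t. (m, a) \<in> G}"
  have mem: "(m + t *\<^sub>R y, a + t * c) \<in> ?G'" if "(m, a) \<in> G" for m a t
    using that by blast
  have "G \<subseteq> ?G'" using mem[of _ _ 0] by auto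
  moreover have "(y, c) \<in> ?G'" using mem[OF norm_dominated_graph_zero[OF G], of 1] by simp
  ultimately show thesis
    using that norm_dominated_graph_extension[OF G y c] y by blast
qed

lemma blinfun_of_total_norm_dominated_graph:
  assumes M: "norm_dominated_graph M" and total: "\<And>x. \<exists>a. (x, a) \<in> M"
  obtains f :: "'b::real_normed_vector \<Rightarrow>\<^sub>L real"
  where "norm f \<le> 1" "\<And>x a. (x, a) \<in> M \<Longrightarrow> blinfun_apply f x = a"
proof -
  define f where "f x = (THE a. (x, a) \<in> M)" for x
  have f_eq: "f x = a" if "(x, a) \<in> M" for x a
    using that norm_dominated_graph_unique[OF M] unfolding f_def by (intro the_equality) blast+
  have f_mem: "(x, f x) \<in> M" for x
    using total[of x] f_eq by blast
  have add: "f (x + y) = f x + f y" for x y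
    using f_eq norm_dominated_graph_add[OF M f_mem f_mem] by blast
  have scale: "f (r *\<^sub>R x) = r *\<^sub>R f x" for r x
    using f_eq norm_dominated_graph_scaleR[OF M f_mem] by simp
  have bound: "norm (f x) \<le> norm x * 1" for x
    using norm_dominated_graph_le_norm[OF M f_mem, of x] norm_dominated_graph_le_norm[OF M f_mem, of "-x"]
      scale[of "-1" x] by simp
  have "bounded_linear f" by (rule bounded_linear_intro[OF add scale bound])
  then have apply_f: "blinfun_apply (Blinfun f) = f" by (rule bounded_linear_Blinfun_apply)
  have "norm (Blinfun f) \<le> 1"
    using bound by (intro norm_blinfun_bound) (simp_all add: apply_f)
  with apply_f f_eq show thesis by (intro that) auto
qed

lemma Hahn_Banach_norm_dominated_graph:
  fixes G0 :: "('b::real_normed_vector \<times> real) set"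
  assumes G0: "norm_dominated_graph G0"
  obtains f :: "'b \<Rightarrow>\<^sub>L real"
  where "norm f \<le> 1" "\<And>x a. (x, a) \<in> G0 \<Longrightarrow> blinfun_apply f x = a"
proof -
  define A where "A = {G. norm_dominated_graph G \<and> G0 \<subseteq> G}"
  have "\<exists>U\<in>A. \<forall>G\<in>C. G \<subseteq> U" if C: "C \<in> chains A" for C
  proof (cases "C = {}")
    case True
    then show ?thesis using G0 unfolding A_def by blast
  next
    case False
    have members: "norm_dominated_graph G \<and> G0 \<subseteq> G" if "G \<in> C" for G
      using chainsD2[OF C] that unfolding A_def by blast
    then have "norm_dominated_graph (\<Union>C)"
      using norm_dominated_graph_Union_chain[OF C _ False] by blast
    moreover have "G0 \<subseteq> \<Union>C" using False members by blast
    ultimately show ?thesis unfolding A_def by blast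
  qed
  then obtain M where M: "M \<in> A" and maximal: "\<forall>G\<in>A. M \<subseteq> G \<longrightarrow> G = M"
    using Zorn_Lemma2[of A] by blast
  then have M_dom: "norm_dominated_graph M" and G0_M: "G0 \<subseteq> M"
    unfolding A_def by auto
  have total: "\<exists>a. (x, a) \<in> M" for x
  proof (rule ccontr)
    assume "\<nexists>a. (x, a) \<in> M"
    then obtain G where "norm_dominated_graph G" "M \<subset> G"
      using norm_dominated_graph_extend[OF M_dom] by blast
    with G0_M maximal show False unfolding A_def by blast
  qed
  obtain f :: "'b \<Rightarrow>\<^sub>L real" where "norm f \<le> 1" "\<And>x a. (x, a) \<in> M \<Longrightarrow> blinfun_apply f x = a"
    using blinfun_of_total_norm_dominated_graph[OF M_dom total] by blast
  with G0_M show thesis by (intro that) auto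
qed

lemma exists_blinfun_with_pair_values:
  fixes x y :: "'b::real_normed_vector"
  assumes dominated: "\<And>\<alpha> \<beta>. \<alpha> * a + \<beta> * b \<le> norm (\<alpha> *\<^sub>R x + \<beta> *\<^sub>R y)"
  obtains f :: "'b \<Rightarrow>\<^sub>L real" where "norm f \<le> 1" "blinfun_apply f x = a" "blinfun_apply f y = b"
proof -
  define G where "G = {(\<alpha> *\<^sub>R x + \<beta> *\<^sub>R y, \<alpha> * a + \<beta> * b) | \<alpha> \<beta>. True}"
  have mem: "(\<alpha> *\<^sub>R x + \<beta> *\<^sub>R y, \<alpha> * a + \<beta> * b) \<in> G" for \<alpha> \<beta>
    unfolding G_def by blast
  have "norm_dominated_graph G"
    unfolding norm_dominated_graph_def
  proof (intro conjI allI impI)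
    show "(0, 0) \<in> G" using mem[of 0 0] by simp
  next
    fix z c z' c' assume "(z, c) \<in> G" "(z', c') \<in> G"
    then obtain p q p' q' where "z = p *\<^sub>R x + q *\<^sub>R y" "c = p * a + q * b"
      "z' = p' *\<^sub>R x + q' *\<^sub>R y" "c' = p' * a + q' * b" unfolding G_def by blast
    then show "(z + z', c + c') \<in> G"
      using mem[of "p + p'" "q + q'"] by (simp add: algebra_simps)
  next
    fix z c r assume "(z, c) \<in> G"
    then obtain p q where "z = p *\<^sub>R x + q *\<^sub>R y" "c = p * a + q * b"
      unfolding G_def by blast
    then show "(r *\<^sub>R z, r * c) \<in> G"
      using mem[of "r * p" "r * q"] by (simp add: algebra_simps)
  next
    fix z c c' assume "(z, c) \<in> G" "(z, c') \<in> G"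
    then obtain p q p' q' where e: "z = p *\<^sub>R x + q *\<^sub>R y" "c = p * a + q * b"
      "z = p' *\<^sub>R x + q' *\<^sub>R y" "c' = p' * a + q' * b" unfolding G_def by blast
    have "(p - p') *\<^sub>R x + (q - q') *\<^sub>R y = 0" "(p' - p) *\<^sub>R x + (q' - q) *\<^sub>R y = 0"
      using e by (simp_all add: algebra_simps)
    then show "c = c'"
      using dominated[of "p - p'" "q - q'"] dominated[of "p' - p" "q' - q"] e
      by (simp add: algebra_simps)
  next
    fix z c assume "(z, c) \<in> G"
    then show "c \<le> norm z" unfolding G_def using dominated by blast
  qed
  then obtain f :: "'b \<Rightarrow>\<^sub>L real" where "norm f \<le> 1" "\<And>z c. (z, c) \<in> G \<Longrightarrow> blinfun_apply f z = c"
    using Hahn_Banach_norm_dominated_graph by blast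
  then show thesis using that mem[of 1 0] mem[of 0 1] by simp
qed

lemma linear_combination_le_norm_of_ray_bound:
  fixes u v :: "'b::real_normed_vector" and g :: "'b \<Rightarrow>\<^sub>L real"
  assumes g: "norm g \<le> 1" "blinfun_apply g u = norm u" "blinfun_apply g v \<le> c"
    and ray: "\<And>s. s > 0 \<Longrightarrow> norm u + s * c \<le> norm (u + s *\<^sub>R v)"
  shows "\<alpha> * norm u + \<beta> * c \<le> norm (\<alpha> *\<^sub>R u + \<beta> *\<^sub>R v)"
proof -
  consider "\<beta> \<le> 0" | "\<beta> > 0" "\<alpha> > 0" | "\<beta> > 0" "\<alpha> \<le> 0" by linarith
  then show ?thesis
  proof cases
    case 1
    have "\<beta> * c \<le> \<beta> * blinfun_apply g v"
      using g(3) 1 by (rule mult_left_mono_neg)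
    then have "\<alpha> * norm u + \<beta> * c \<le> blinfun_apply g (\<alpha> *\<^sub>R u + \<beta> *\<^sub>R v)"
      using g(2) by (simp add: blinfun.add_right blinfun.scaleR_right)
    also have "\<dots> \<le> norm g * norm (\<alpha> *\<^sub>R u + \<beta> *\<^sub>R v)"
      using norm_blinfun[of g "\<alpha> *\<^sub>R u + \<beta> *\<^sub>R v"] by simp
    also have "\<dots> \<le> norm (\<alpha> *\<^sub>R u + \<beta> *\<^sub>R v)"
      using mult_right_mono[OF g(1) norm_ge_zero] by simp
    finally show ?thesis .
  next
    case 2
    have "\<alpha> * (norm u + (\<beta> / \<alpha>) * c) \<le> \<alpha> * norm (u + (\<beta> / \<alpha>) *\<^sub>R v)"
      using ray[of "\<beta> / \<alpha>"] 2 by simp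
    also have "\<dots> = norm (\<alpha> *\<^sub>R (u + (\<beta> / \<alpha>) *\<^sub>R v))"
      using 2 by simp
    also have "\<alpha> *\<^sub>R (u + (\<beta> / \<alpha>) *\<^sub>R v) = \<alpha> *\<^sub>R u + \<beta> *\<^sub>R v"
      using 2 by (simp add: scaleR_add_right)
    finally show ?thesis using 2 by (simp add: distrib_left)
  next
    case 3
    have split: "\<beta> *\<^sub>R (u + v) = (\<alpha> *\<^sub>R u + \<beta> *\<^sub>R v) + (\<beta> - \<alpha>) *\<^sub>R u"
      by (simp add: algebra_simps)
    have "\<beta> * (norm u + c) \<le> \<beta> * norm (u + v)"
      using ray[of 1] 3 by simp
    also have "\<dots> = norm ((\<alpha> *\<^sub>R u + \<beta> *\<^sub>R v) + (\<beta> - \<alpha>) *\<^sub>R u)"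
      unfolding split[symmetric] using 3 by simp
    also have "\<dots> \<le> norm (\<alpha> *\<^sub>R u + \<beta> *\<^sub>R v) + (\<beta> - \<alpha>) * norm u"
      using norm_triangle_ineq[of "\<alpha> *\<^sub>R u + \<beta> *\<^sub>R v" "(\<beta> - \<alpha>) *\<^sub>R u"] 3 by simp
    finally show ?thesis by (simp add: algebra_simps)
  qed
qed

lemma smooth_point_directional_bound:
  fixes u v :: "'b::real_normed_vector" and g :: "'b \<Rightarrow>\<^sub>L real"
  assumes smooth: "smooth_point u" and g: "norm g = 1" "blinfun_apply g u = norm u"
    and c: "blinfun_apply g v < c"
  obtains s where "s > 0" "norm (u + s *\<^sub>R v) < norm u + s * c"
proof (rule ccontr)
  assume "\<not> thesis"
  with that have ray: "norm u + s * c \<le> norm (u + s *\<^sub>R v)" if "s > 0" for s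
    using \<open>s > 0\<close> not_less by blast
  have "\<alpha> * norm u + \<beta> * c \<le> norm (\<alpha> *\<^sub>R u + \<beta> *\<^sub>R v)" for \<alpha> \<beta>
    using g less_imp_le[OF c] by (intro linear_combination_le_norm_of_ray_bound[OF _ _ _ ray]) simp_all
  then obtain f :: "'b \<Rightarrow>\<^sub>L real"
    where f: "norm f \<le> 1" "blinfun_apply f u = norm u" "blinfun_apply f v = c"
    by (rule exists_blinfun_with_pair_values)
  have "u \<noteq> 0" using smooth unfolding smooth_point_def by blast
  moreover have "norm u \<le> norm f * norm u"
    using norm_blinfun[of f u] f(2) by simp
  ultimately have "norm f = 1" using f(1) by simp
  then have "f = g"
    using smooth f(2) g unfolding smooth_point_def by blast
  with f(3) c show False by simp
qed

lemma exists_unit_vector_near_norm: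
  fixes B :: "'a::real_normed_vector \<Rightarrow>\<^sub>L 'b::real_normed_vector" and x0 :: 'a
  assumes x0: "norm x0 = 1" and e: "e > 0"
  obtains y where "norm y = 1" "norm B - e < norm (blinfun_apply B y)"
proof (rule ccontr)
  assume "\<not> thesis"
  with that have below: "norm (blinfun_apply B y) \<le> norm B - e" if "norm y = 1" for y
    using \<open>norm y = 1\<close> not_less by blast
  have "0 \<le> norm B - e" using below[OF x0] norm_ge_zero[of "blinfun_apply B x0"] by linarith
  then have "norm B \<le> norm B - e"
  proof (rule norm_blinfun_bound)
    fix x :: 'a
    show "norm (blinfun_apply B x) \<le> (norm B - e) * norm x"
    proof (cases "x = 0")
      case False
      have "blinfun_apply B x = blinfun_apply B (norm x *\<^sub>R (x /\<^sub>R norm x))"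
        using False by simp
      also have "\<dots> = norm x *\<^sub>R blinfun_apply B (x /\<^sub>R norm x)"
        by (rule blinfun.scaleR_right)
      finally have "norm (blinfun_apply B x) = norm x * norm (blinfun_apply B (x /\<^sub>R norm x))"
        by simp
      also have "\<dots> \<le> norm x * (norm B - e)"
        using below[of "x /\<^sub>R norm x"] False by (simp add: mult_left_mono)
      finally show ?thesis by (simp add: mult.commute)
    qed simp
  qed
  with e show False by simp
qed

lemma norm_add_scaleR_lower_bound_mono:
  fixes a b :: "'a::real_normed_vector"
  assumes t: "0 < t" "t \<le> s" and bound: "norm a + t * d \<le> norm (a + t *\<^sub>R b)"
  shows "norm a + s * d \<le> norm (a + s *\<^sub>R b)"
proof -
  define l where "l = t / s"
  have l: "0 < l" "l \<le> 1" "t = l * s" using t by (auto simp: l_def)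
  \<comment> \<open>convexity of \<open>t \<mapsto> norm (a + t *\<^sub>R b)\<close> between \<open>0\<close> and \<open>s\<close>\<close>
  have "a + t *\<^sub>R b = (1 - l) *\<^sub>R a + l *\<^sub>R (a + s *\<^sub>R b)"
    using l by (simp add: algebra_simps)
  then have "norm (a + t *\<^sub>R b) \<le> (1 - l) * norm a + l * norm (a + s *\<^sub>R b)"
    using norm_triangle_ineq[of "(1 - l) *\<^sub>R a" "l *\<^sub>R (a + s *\<^sub>R b)"] l by simp
  with bound have "l * (s * d) \<le> l * (norm (a + s *\<^sub>R b) - norm a)"
    using l by (simp add: algebra_simps)
  with l show ?thesis by simp
qed

lemma norming_sequence_of_perturbation:
  fixes T S :: "'a::real_normed_vector \<Rightarrow>\<^sub>L 'b::real_normed_vector"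
  assumes unit: "\<And>n. norm (y n) = 1" and t: "t \<longlonglongrightarrow> 0"
    and bound: "\<And>n. norm T + t n * d \<le> norm (blinfun_apply (T + t n *\<^sub>R S) (y n))"
  shows "norming_sequence T y"
  unfolding norming_sequence_def
proof (intro conjI allI unit)
  have upper: "norm (blinfun_apply T (y n)) \<le> norm T" for n
    using norm_blinfun[of T "y n"] unit by simp
  have perturbation: "norm (blinfun_apply (T + t n *\<^sub>R S) (y n))
      \<le> norm (blinfun_apply T (y n)) + \<bar>t n\<bar> * norm S" for n
  proof -
    have "norm (blinfun_apply (T + t n *\<^sub>R S) (y n))
        \<le> norm (blinfun_apply T (y n)) + \<bar>t n\<bar> * norm (blinfun_apply S (y n))"
      using norm_triangle_ineq[of "blinfun_apply T (y n)" "t n *\<^sub>R blinfun_apply S (y n)"]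
      by (simp add: plus_blinfun.rep_eq scaleR_blinfun.rep_eq)
    also have "\<dots> \<le> norm (blinfun_apply T (y n)) + \<bar>t n\<bar> * norm S"
      using norm_blinfun[of S "y n"] unit[of n] by (simp add: mult_left_mono)
    finally show ?thesis .
  qed
  have lower: "norm T + (t n * d - \<bar>t n\<bar> * norm S) \<le> norm (blinfun_apply T (y n))" for n
    using bound[of n] perturbation[of n] by linarith
  have "(\<lambda>n. norm T + (t n * d - \<bar>t n\<bar> * norm S)) \<longlonglongrightarrow> norm T + (0 * d - \<bar>0\<bar> * norm S)"
    by (intro tendsto_intros t)
  then have "(\<lambda>n. norm T + (t n * d - \<bar>t n\<bar> * norm S)) \<longlonglongrightarrow> norm T"
    by simp
  from tendsto_sandwich[OF _ _ this tendsto_const]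
  show "(\<lambda>n. norm (blinfun_apply T (y n))) \<longlonglongrightarrow> norm T"
    using lower upper by (simp add: always_eventually)
qed

lemma norming_sequence_from_support_functional:
  fixes T S :: "'a::real_normed_vector \<Rightarrow>\<^sub>L 'b::real_normed_vector"
    and F :: "('a \<Rightarrow>\<^sub>L 'b) \<Rightarrow>\<^sub>L real" and x0 :: 'a
  assumes x0: "norm x0 = 1" and F: "norm F \<le> 1" "blinfun_apply F T = norm T"
    and t: "\<And>n. t n > 0" "t \<longlonglongrightarrow> 0" and e: "e > 0"
  obtains y where "norming_sequence T y"
    "\<And>n. norm (blinfun_apply T (y n)) + t n * (blinfun_apply F S - e)
       \<le> norm (blinfun_apply T (y n) + t n *\<^sub>R blinfun_apply S (y n))"
proof -
  have "\<exists>y. norm y = 1 \<and> norm (T + t n *\<^sub>R S) - t n * e < norm (blinfun_apply (T + t n *\<^sub>R S) y)" for n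
    using exists_unit_vector_near_norm[OF x0, of "t n * e" "T + t n *\<^sub>R S"] t(1) e by auto
  then obtain y where unit: "\<And>n. norm (y n) = 1"
    and near: "\<And>n. norm (T + t n *\<^sub>R S) - t n * e < norm (blinfun_apply (T + t n *\<^sub>R S) (y n))"
    by metis
  have grow: "norm T + t n * blinfun_apply F S \<le> norm (T + t n *\<^sub>R S)" for n
  proof -
    have "norm T + t n * blinfun_apply F S = blinfun_apply F (T + t n *\<^sub>R S)"
      using F(2) by (simp add: blinfun.add_right blinfun.scaleR_right)
    also have "\<dots> \<le> norm F * norm (T + t n *\<^sub>R S)"
      using norm_blinfun[of F "T + t n *\<^sub>R S"] by simp
    also have "\<dots> \<le> norm (T + t n *\<^sub>R S)"
      using mult_right_mono[OF F(1) norm_ge_zero] by simp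
    finally show ?thesis .
  qed
  have lower: "norm T + t n * (blinfun_apply F S - e) \<le> norm (blinfun_apply (T + t n *\<^sub>R S) (y n))" for n
    using grow[of n] near[of n] by (simp add: right_diff_distrib)
  have "norm (blinfun_apply T (y n)) \<le> norm T" for n
    using norm_blinfun[of T "y n"] unit by simp
  with lower have "norm (blinfun_apply T (y n)) + t n * (blinfun_apply F S - e)
      \<le> norm (blinfun_apply T (y n) + t n *\<^sub>R blinfun_apply S (y n))" for n
    by (smt (verit) plus_blinfun.rep_eq scaleR_blinfun.rep_eq)
  with norming_sequence_of_perturbation[OF unit t(2) lower] show thesis
    by (rule that)
qed

lemma support_functional_le_evaluation:
  fixes T S :: "'a::real_normed_vector \<Rightarrow>\<^sub>L 'b::real_normed_vector"
    and F :: "('a \<Rightarrow>\<^sub>L 'b) \<Rightarrow>\<^sub>L real" and g :: "'b \<Rightarrow>\<^sub>L real"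
  assumes x0: "norm x0 = 1"
    and smooth: "smooth_point (blinfun_apply T x0)"
    and g: "norm g = 1" "blinfun_apply g (blinfun_apply T x0) = norm (blinfun_apply T x0)"
    and norming: "\<And>xs. norming_sequence T xs \<Longrightarrow>
           \<exists>r a. strict_mono r \<and> \<bar>a\<bar> = 1 \<and> (xs \<circ> r) \<longlonglongrightarrow> a *\<^sub>R x0"
    and F: "norm F \<le> 1" "blinfun_apply F T = norm T"
  shows "blinfun_apply F S \<le> blinfun_apply g (blinfun_apply S x0)"
proof (rule ccontr)
  let ?u = "blinfun_apply T x0" and ?v = "blinfun_apply S x0"
  define \<delta> where "\<delta> = blinfun_apply F S - blinfun_apply g ?v"
  assume "\<not> ?thesis"
  then have "\<delta> > 0" by (simp add: \<delta>_def)
  then have "blinfun_apply g ?v < blinfun_apply g ?v + \<delta> / 2" by simp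
  then obtain s where s: "s > 0" "norm (?u + s *\<^sub>R ?v) < norm ?u + s * (blinfun_apply g ?v + \<delta> / 2)"
    by (rule smooth_point_directional_bound[OF smooth g])
  define t where "t n = s / real (Suc n)" for n
  have t: "0 < t n" "t n \<le> s" for n
    using s by (auto simp: t_def field_simps)
  have "t \<longlonglongrightarrow> 0"
    unfolding t_def by (rule LIMSEQ_Suc[OF lim_const_over_n])
  define d where "d = blinfun_apply F S - \<delta> / 4"
  obtain y where "norming_sequence T y" and lower:
    "\<And>n. norm (blinfun_apply T (y n)) + t n * d \<le> norm (blinfun_apply T (y n) + t n *\<^sub>R blinfun_apply S (y n))"
    using norming_sequence_from_support_functional[OF x0 F t(1) \<open>t \<longlonglongrightarrow> 0\<close>, of "\<delta> / 4" S]
      \<open>\<delta> > 0\<close> unfolding d_def by auto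
  then obtain r a where r: "strict_mono r" "\<bar>a\<bar> = 1" "(y \<circ> r) \<longlonglongrightarrow> a *\<^sub>R x0"
    using norming by blast
  define h where "h x = norm (blinfun_apply T x + s *\<^sub>R blinfun_apply S x) - norm (blinfun_apply T x)" for x
  have "s * d \<le> h (y n)" for n
    using norm_add_scaleR_lower_bound_mono[OF t(1)[of n] t(2)[of n] lower[of n]] unfolding h_def by simp
  moreover have "(\<lambda>n. h ((y \<circ> r) n)) \<longlonglongrightarrow> h (a *\<^sub>R x0)"
    unfolding h_def by (intro tendsto_intros r(3))
  ultimately have "s * d \<le> h (a *\<^sub>R x0)"
    by (intro LIMSEQ_le_const[of _ _ "s * d"]) auto
  also have "h (a *\<^sub>R x0) = h x0"
  proof -
    have "blinfun_apply T (a *\<^sub>R x0) + s *\<^sub>R blinfun_apply S (a *\<^sub>R x0) = a *\<^sub>R (?u + s *\<^sub>R ?v)"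
      by (simp add: blinfun.scaleR_right algebra_simps)
    then show ?thesis using r(2) by (simp add: h_def blinfun.scaleR_right)
  qed
  also have "h x0 < s * (blinfun_apply g ?v + \<delta> / 2)"
    using s(2) by (simp add: h_def)
  finally have "d < blinfun_apply g ?v + \<delta> / 2"
    using s(1) by simp
  with \<open>\<delta> > 0\<close> show False
    using d_def \<delta>_def by linarith
qed

lemma exists_evaluation_functional:
  fixes g :: "'b::real_normed_vector \<Rightarrow>\<^sub>L real" and x :: "'a::real_normed_vector"
  obtains G :: "('a \<Rightarrow>\<^sub>L 'b) \<Rightarrow>\<^sub>L real"
  where "norm G \<le> norm g * norm x" "\<And>S. blinfun_apply G S = blinfun_apply g (blinfun_apply S x)"
proof
  have "bounded_linear (\<lambda>S::'a \<Rightarrow>\<^sub>L 'b. blinfun_apply g (blinfun_apply S x))"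
    by (intro bounded_linear_compose[OF blinfun.bounded_linear_right]
        bounded_bilinear.bounded_linear_left[OF bounded_bilinear_blinfun_apply])
  then show apply_G: "blinfun_apply (Blinfun (\<lambda>S. blinfun_apply g (blinfun_apply S x))) S
      = blinfun_apply g (blinfun_apply S x)" for S
    by (simp add: bounded_linear_Blinfun_apply)
  show "norm (Blinfun (\<lambda>S::'a \<Rightarrow>\<^sub>L 'b. blinfun_apply g (blinfun_apply S x))) \<le> norm g * norm x"
  proof (rule norm_blinfun_bound)
    fix S :: "'a \<Rightarrow>\<^sub>L 'b"
    have "norm (blinfun_apply g (blinfun_apply S x)) \<le> norm g * (norm S * norm x)"
      using norm_blinfun[of g "blinfun_apply S x"] mult_left_mono[OF norm_blinfun[of S x], of "norm g"]
      by simp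
    then show "norm (blinfun_apply (Blinfun (\<lambda>S. blinfun_apply g (blinfun_apply S x))) S) \<le> norm g * norm x * norm S"
      by (simp add: apply_G mult_ac)
  qed simp
qed

lemma real_blinfun_eqI_le:
  fixes F G :: "'a::real_normed_vector \<Rightarrow>\<^sub>L real"
  assumes "\<And>S. blinfun_apply F S \<le> blinfun_apply G S"
  shows "F = G"
proof (rule blinfun_eqI)
  fix S
  show "blinfun_apply F S = blinfun_apply G S"
    using assms[of S] assms[of "- S"] by (simp add: blinfun.minus_right)
qed

theorem theorem3p4:
  fixes T :: "'a::real_normed_vector \<Rightarrow>\<^sub>L 'b::real_normed_vector"
    and x0 :: 'a
  assumes "norm x0 = 1"
    and "norm_attain_set T = {x0, - x0}"
    and "smooth_point (blinfun_apply T x0)"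
    and "\<And>xs. norming_sequence T xs \<Longrightarrow>
           \<exists>r a. strict_mono r \<and> \<bar>a\<bar> = 1 \<and> (xs \<circ> r) \<longlonglongrightarrow> a *\<^sub>R x0"
  shows "smooth_point T"
proof -
  have attain: "norm (blinfun_apply T x0) = norm T"
    using assms(2) by (auto simp: norm_attain_set_def)
  obtain g :: "'b \<Rightarrow>\<^sub>L real"
    where g: "norm g = 1" "blinfun_apply g (blinfun_apply T x0) = norm (blinfun_apply T x0)"
    using assms(3) unfolding smooth_point_def by blast
  have "T \<noteq> 0"
    using assms(3) attain unfolding smooth_point_def by auto
  obtain G :: "('a \<Rightarrow>\<^sub>L 'b) \<Rightarrow>\<^sub>L real"
    where G: "norm G \<le> 1" "\<And>S. blinfun_apply G S = blinfun_apply g (blinfun_apply S x0)"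
    using exists_evaluation_functional[of g x0] g(1) assms(1) by auto
  have GT: "blinfun_apply G T = norm T"
    using G(2) g(2) attain by simp
  have "norm T \<le> norm G * norm T"
    using norm_blinfun[of G T] GT by simp
  with G(1) \<open>T \<noteq> 0\<close> have "norm G = 1" by simp
  moreover have "F = G" if "norm F = 1" "blinfun_apply F T = norm T" for F
    using support_functional_le_evaluation[OF assms(1) assms(3) g assms(4)] that G(2)
    by (intro real_blinfun_eqI_le) simp
  ultimately show ?thesis
    unfolding smooth_point_def using \<open>T \<noteq> 0\<close> GT by blast
qed

end
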